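(* $\mathsf{C}_{\mathbb{N}^\mathbb{N}} \equiv_{\mathrm{sW}} \mathsf{FindHS}_{\boldsymbol{\Delta}^0_1} \equiv_{\mathrm{sW}} \mathsf{FindHS}_{\boldsymbol{\Pi}^0_1}$.
   Context: Strong Weihrauch reducibility: $f\le_{\mathrm{sW}} g$ iff there are computable $\Phi,\Psi:\subseteq\mathbb{N}^\mathbb{N}\to\mathbb{N}^\mathbb{N}$ such that for every realizer $G$ of $g$, $\Psi\circ G\circ\Phi$ realizes $f$; $\equiv_{\mathrm{sW}}$ is reducibility both ways. The Ramsey space $[\mathbb{N}]^\mathbb{N}$ is the set of strictly increasing functions $\mathbb{N}\to\mathbb{N}$ with the Baire-space topology; $fg=f\circ g$. For $P\subseteq[\mathbb{N}]^\mathbb{N}$, $f$ is homogeneous for $P$ if either $fg\in P$ for all $g\in[\mathbb{N}]^\mathbb{N}$ ($f$ lands in $P$) or $fg\notin P$ for all $g$ ($f$ avoids $P$); $\mathrm{HS}(P)$ is the set of homogeneous solutions. A name for an open $P\subseteq[\mathbb{N}]^\mathbb{N}$ is an enumeration of a set of finite strictly increasing strings whose cones have union $P$; a name for a clopen set is a pair of names for it and its complement. $\mathsf{FindHS}_{\boldsymbol{\Pi}^0_1}$: input an open $P$ with $\mathrm{HS}(P)\setminus P\neq\emptyset$, output any element of $\mathrm{HS}(P)\setminus P$. $\mathsf{FindHS}_{\boldsymbol{\Delta}^0_1}$: input a clopen $D$ with $\mathrm{HS}(D)\cap D\ne\emptyset$, output any element of $\mathrm{HS}(D)\cap D$. $\mathsf{C}_{\mathbb{N}^\mathbb{N}}$: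 input a name (e.g. a tree $T$ on $\mathbb{N}$ with $[T]$ the set) of a nonempty closed subset of $\mathbb{N}^\mathbb{N}$, output any element of it. *)

theory Defs
  imports Main "HOL-Library.Nat_Bijection"
begin

type_synonym baire = "nat \<Rightarrow> nat"

text \<open>Programs for partial recursive functions relative to an auxiliary input alpha (a point of
Baire space).  A functional Phi from Baire space to Baire space is computable iff there is a
program e such that Phi(alpha)(n) is the value of e on input function alpha and input [n].\<close>

datatype rprog = RZero | RSucc | RProj nat | RQuery | RComp rprog "rprog list"
  | RPrimRec rprog rprog | RMin rprog

inductive reval :: "baire \<Rightarrow> rprog \<Rightarrow> nat list \<Rightarrow> nat \<Rightarrow> bool" where
  zero: "reval \<alpha> RZero xs 0"
| succ: "reval \<alpha> RSucc (x # xs) (Suc x)"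
| proj: "i < length xs \<Longrightarrow> reval \<alpha> (RProj i) xs (xs ! i)"
| orc: "reval \<alpha> RQuery (x # xs) (\<alpha> x)"
| comp: "length ys = length gs \<Longrightarrow> (\<forall>i < length gs. reval \<alpha> (gs ! i) xs (ys ! i))
          \<Longrightarrow> reval \<alpha> f ys z \<Longrightarrow> reval \<alpha> (RComp f gs) xs z"
| prec0: "reval \<alpha> g xs y \<Longrightarrow> reval \<alpha> (RPrimRec g h) (0 # xs) y"
| precS: "reval \<alpha> (RPrimRec g h) (n # xs) y \<Longrightarrow> reval \<alpha> h (n # y # xs) z
          \<Longrightarrow> reval \<alpha> (RPrimRec g h) (Suc n # xs) z"
| mini: "reval \<alpha> f (n # xs) 0 \<Longrightarrow> (\<forall>m < n. \<exists>y. reval \<alpha> f (m # xs) y \<and> 0 < y)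
          \<Longrightarrow> reval \<alpha> (RMin f) xs n"

definition comp_at :: "rprog \<Rightarrow> baire \<Rightarrow> baire \<Rightarrow> bool" where
  "comp_at e \<alpha> \<beta> \<longleftrightarrow> (\<forall>n. reval \<alpha> e [n] (\<beta> n))"

text \<open>A problem is given on the level of names: a domain of admissible input names and,
for each input name, the set of acceptable output names.\<close>
type_synonym problem = "baire set \<times> (baire \<Rightarrow> baire set)"

definition pdom :: "problem \<Rightarrow> baire set" where "pdom P = fst P"
definition psol :: "problem \<Rightarrow> baire \<Rightarrow> baire set" where "psol P = snd P"

definition realizer :: "problem \<Rightarrow> (baire \<Rightarrow> baire) \<Rightarrow> bool" where
  "realizer P G \<longleftrightarrow> (\<forall>p \<in> pdom P. G p \<in> psol P p)"

definition sW_le :: "problem \<Rightarrow> problem \<Rightarrow> bool" where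
  "sW_le f g \<longleftrightarrow> (\<exists>eP eQ. \<forall>G. realizer g G \<longrightarrow>
     (\<forall>p \<in> pdom f. \<exists>q r. comp_at eP p q \<and> q \<in> pdom g \<and> comp_at eQ (G q) r \<and> r \<in> psol f p))"

definition sW_equiv :: "problem \<Rightarrow> problem \<Rightarrow> bool" where
  "sW_equiv f g \<longleftrightarrow> sW_le f g \<and> sW_le g f"

text \<open>Finite strings are coded by list_encode.  A name of a closed set is the characteristic
function of a tree T (closed under prefixes); the named set is the set of paths [T].\<close>
definition tree_of :: "baire \<Rightarrow> nat list set" where
  "tree_of p = {s. p (list_encode s) \<noteq> 0}"

definition is_tree_name :: "baire \<Rightarrow> bool" where
  "is_tree_name p \<longleftrightarrow> (\<forall>x. p x \<le> 1) \<and>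
     (\<forall>s t. s @ t \<in> tree_of p \<longrightarrow> s \<in> tree_of p)"

definition paths :: "nat list set \<Rightarrow> baire set" where
  "paths T = {x. \<forall>n. map x [0..<n] \<in> T}"

definition C_Baire :: problem where
  "C_Baire = ({p. is_tree_name p \<and> paths (tree_of p) \<noteq> {}}, \<lambda>p. paths (tree_of p))"

definition ramsey :: "baire set" where "ramsey = {f. strict_mono f}"

text \<open>A name of an open set enumerates a set of finite strictly increasing strings:
value 0 means "nothing enumerated", value k+1 enumerates the string coded by k.\<close>
definition enum_strings :: "baire \<Rightarrow> nat list set" where
  "enum_strings p = {list_decode (p n - 1) | n. 0 < p n}"

definition is_open_name :: "baire \<Rightarrow> bool" where
  "is_open_name p \<longleftrightarrow> (\<forall>s \<in> enum_strings p. sorted_wrt (<) s)"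

definition cone :: "nat list \<Rightarrow> baire set" where
  "cone s = {f \<in> ramsey. map f [0..<length s] = s}"

definition open_of :: "baire \<Rightarrow> baire set" where
  "open_of p = (\<Union>s \<in> enum_strings p. cone s)"

definition HS :: "baire set \<Rightarrow> baire set" where
  "HS P = {f \<in> ramsey. (\<forall>g \<in> ramsey. f \<circ> g \<in> P) \<or> (\<forall>g \<in> ramsey. f \<circ> g \<notin> P)}"

definition FindHS_Pi01 :: problem where
  "FindHS_Pi01 = ({p. is_open_name p \<and> HS (open_of p) - open_of p \<noteq> {}},
                  \<lambda>p. HS (open_of p) - open_of p)"

text \<open>Pairing of Baire-space elements: the pair of p and q is the interleaving.\<close>
definition pleft :: "baire \<Rightarrow> baire" where "pleft p = (\<lambda>n. p (2 * n))"
definition pright :: "baire \<Rightarrow> baire" where "pright p = (\<lambda>n. p (2 * n + 1))"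

definition is_clopen_name :: "baire \<Rightarrow> bool" where
  "is_clopen_name p \<longleftrightarrow> is_open_name (pleft p) \<and> is_open_name (pright p) \<and>
     open_of (pleft p) \<inter> open_of (pright p) = {} \<and>
     open_of (pleft p) \<union> open_of (pright p) = ramsey"

definition FindHS_Delta01 :: problem where
  "FindHS_Delta01 = ({p. is_clopen_name p \<and> HS (open_of (pleft p)) \<inter> open_of (pleft p) \<noteq> {}},
                     \<lambda>p. HS (open_of (pleft p)) \<inter> open_of (pleft p))"

end

(*
  The problems are reduced in a cycle FindHS_Delta01 <= FindHS_Pi01 <= C_Baire <= FindHS_Delta01.

  If E is the complement of a clopen D in the Ramsey space, then HS(D) = HS(E) and
  HS(D) /\ D = HS(E) - E, so the name of E turns the problem for D into the one for the open set E.

  Let an open P be enumerated by strictly increasing strings s_0, s_1, .... Since f o g ranges over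
  the subsequences of f, a strictly increasing f lies in HS(P) - P iff no s_n is a subsequence of f,
  i.e. iff no set(s_n) is contained in range f. Hence HS(P) - P is the set of paths through the tree
  of increasing strings t with set(s_n) not contained in set(t) for all n < |t|, and this tree is
  computable from the name of P.

  Conversely, for a tree T the set D of all h such that h(0) codes a node of T and h(1) codes a
  proper extension of it depends only on h(0) and h(1), so D is clopen. The codes of the initial
  segments of a path lie in HS(D) /\ D, and every f in HS(D) /\ D codes a chain f(0), f(1), ... of
  properly extending nodes of T, from which a path is read off diagonally.
*)

theory Submission
  imports Defs "HOL-Library.More_List" "HOL-Library.Infinite_Set" "HOL-Library.Sublist"
begin

section \<open>Computable functionals relative to an oracle\<close>

definition computable :: "nat \<Rightarrow> (baire \<Rightarrow> nat list \<Rightarrow> nat) \<Rightarrow> bool" where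
  "computable k F \<longleftrightarrow> (\<exists>e. \<forall>\<alpha> xs. length xs = k \<longrightarrow> reval \<alpha> e xs (F \<alpha> xs))"

definition computable_pred :: "nat \<Rightarrow> (baire \<Rightarrow> nat list \<Rightarrow> bool) \<Rightarrow> bool" where
  "computable_pred k P \<longleftrightarrow> computable k (\<lambda>\<alpha> xs. of_bool (P \<alpha> xs))"

lemma computable_cong:
  "computable k F \<Longrightarrow> (\<And>\<alpha> xs. length xs = k \<Longrightarrow> F \<alpha> xs = G \<alpha> xs) \<Longrightarrow> computable k G"
  unfolding computable_def by metis

lemma computable_pred_cong:
  "computable_pred k P \<Longrightarrow> (\<And>\<alpha> xs. length xs = k \<Longrightarrow> P \<alpha> xs = Q \<alpha> xs) \<Longrightarrow> computable_pred k Q"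
  unfolding computable_pred_def by (erule computable_cong) simp

lemma computable_zero: "computable k (\<lambda>\<alpha> xs. 0)"
  unfolding computable_def by (blast intro: reval.zero)

lemma computable_proj: "i < k \<Longrightarrow> computable k (\<lambda>\<alpha> xs. xs ! i)"
  unfolding computable_def by (metis reval.proj)

lemma computable_Suc_arg: "computable 1 (\<lambda>\<alpha> xs. Suc (xs ! 0))"
  unfolding computable_def by (auto simp: length_Suc_conv intro!: exI[of _ RSucc] reval.succ)

lemma computable_oracle_arg: "computable 1 (\<lambda>\<alpha> xs. \<alpha> (xs ! 0))"
  unfolding computable_def by (auto simp: length_Suc_conv intro!: exI[of _ RQuery] reval.orc)

lemma computable_programs:
  assumes "list_all (computable k) Gs"
  shows "\<exists>es. list_all2 (\<lambda>e G. \<forall>\<alpha> xs. length xs = k \<longrightarrow> reval \<alpha> e xs (G \<alpha> xs)) es Gs"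
  using assms by (induction Gs) (auto simp: computable_def list_all2_Cons2)

lemma computable_comp:
  assumes "computable (length Gs) F" and "list_all (computable k) Gs"
  shows "computable k (\<lambda>\<alpha> xs. F \<alpha> (map (\<lambda>G. G \<alpha> xs) Gs))"
proof -
  obtain e where e: "\<forall>\<alpha> xs. length xs = length Gs \<longrightarrow> reval \<alpha> e xs (F \<alpha> xs)"
    using assms(1) unfolding computable_def by blast
  obtain es where es: "list_all2 (\<lambda>e G. \<forall>\<alpha> xs. length xs = k \<longrightarrow> reval \<alpha> e xs (G \<alpha> xs)) es Gs"
    using computable_programs[OF assms(2)] by blast
  have "reval \<alpha> (RComp e es) xs (F \<alpha> (map (\<lambda>G. G \<alpha> xs) Gs))" if "length xs = k" for \<alpha> xs
    using es e that
    by (intro reval.comp[where ys = "map (\<lambda>G. G \<alpha> xs) Gs"]) (auto simp: list_all2_conv_all_nth)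
  then show ?thesis unfolding computable_def by blast
qed

lemma computable_comp1: "computable 1 F \<Longrightarrow> computable k G \<Longrightarrow> computable k (\<lambda>\<alpha> xs. F \<alpha> [G \<alpha> xs])"
  using computable_comp[of "[G]" F k] by simp

lemma computable_Suc: "computable k F \<Longrightarrow> computable k (\<lambda>\<alpha> xs. Suc (F \<alpha> xs))"
  using computable_comp1[OF computable_Suc_arg] by simp

lemma computable_oracle: "computable k F \<Longrightarrow> computable k (\<lambda>\<alpha> xs. \<alpha> (F \<alpha> xs))"
  using computable_comp1[OF computable_oracle_arg] by simp

lemma computable_const: "computable k (\<lambda>\<alpha> xs. c)"
  by (induction c) (auto intro: computable_zero computable_Suc)

lemma computable_reindex:
  assumes "computable (length is) F" and "\<forall>i \<in> set is. i < k"
  shows "computable k (\<lambda>\<alpha> xs. F \<alpha> (map ((!) xs) is))"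
proof -
  have "list_all (computable k) (map (\<lambda>i \<alpha> xs. xs ! i) is)"
    using assms(2) by (auto simp: list_all_iff intro: computable_proj)
  with computable_comp[of "map (\<lambda>i \<alpha> xs. xs ! i) is" F k] assms(1) show ?thesis
    by (simp add: comp_def)
qed

lemma map_nth_upt_length: "map ((!) xs) [a..<length xs] = drop a xs"
  by (rule nth_equalityI) auto

lemma computable_tl_args:
  assumes "computable k F"
  shows "computable (Suc k) (\<lambda>\<alpha> ys. F \<alpha> (tl ys))"
proof -
  have "computable (Suc k) (\<lambda>\<alpha> ys. F \<alpha> (map ((!) ys) [1..<Suc k]))"
    using assms by (intro computable_reindex) (simp_all del: upt_Suc)
  moreover have "map ((!) ys) [1..<length ys] = tl ys" for ys :: "nat list"
    by (simp add: map_nth_upt_length drop_Suc)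
  ultimately show ?thesis
    by (metis (no_types, lifting) computable_cong)
qed

lemma computable_drop_second_arg:
  assumes "computable (Suc k) F"
  shows "computable (Suc (Suc k)) (\<lambda>\<alpha> ys. F \<alpha> (ys ! 0 # drop 2 ys))"
proof -
  have "computable (Suc (Suc k)) (\<lambda>\<alpha> ys. F \<alpha> (map ((!) ys) (0 # [2..<Suc (Suc k)])))"
    using assms by (intro computable_reindex) (auto simp: numeral_2_eq_2 simp del: upt_Suc)
  then show ?thesis
    by (rule computable_cong) (metis map_nth_upt_length list.simps(9))
qed

lemma computable_rec_nat:
  assumes N: "computable k N" and G: "computable k G" and H: "computable (Suc (Suc k)) H"
  shows "computable k (\<lambda>\<alpha> xs. rec_nat (G \<alpha> xs) (\<lambda>n y. H \<alpha> (n # y # xs)) (N \<alpha> xs))"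
proof -
  obtain g where g: "\<forall>\<alpha> xs. length xs = k \<longrightarrow> reval \<alpha> g xs (G \<alpha> xs)"
    using G unfolding computable_def by blast
  obtain h where h: "\<forall>\<alpha> xs. length xs = Suc (Suc k) \<longrightarrow> reval \<alpha> h xs (H \<alpha> xs)"
    using H unfolding computable_def by blast
  have "reval \<alpha> (RPrimRec g h) (n # xs) (rec_nat (G \<alpha> xs) (\<lambda>n y. H \<alpha> (n # y # xs)) n)"
    if "length xs = k" for \<alpha> xs n
    using that by (induction n) (auto intro!: reval.prec0 reval.precS g[rule_format] h[rule_format])
  then have "computable (Suc k) (\<lambda>\<alpha> xs. rec_nat (G \<alpha> (tl xs)) (\<lambda>n y. H \<alpha> (n # y # tl xs)) (hd xs))"
    unfolding computable_def by (intro exI[of _ "RPrimRec g h"]) (auto simp: length_Suc_conv)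
  moreover have "list_all (computable k) (N # map (\<lambda>i \<alpha> xs. xs ! i) [0..<k])"
    using N by (auto simp: list_all_iff intro: computable_proj)
  ultimately show ?thesis
    using computable_comp[of "N # map (\<lambda>i \<alpha> xs. xs ! i) [0..<k]"]
    by (fastforce simp: comp_def map_nth intro: computable_cong)
qed

lemma computable_add:
  assumes F: "computable k F" and G: "computable k G"
  shows "computable k (\<lambda>\<alpha> xs. F \<alpha> xs + G \<alpha> xs)"
proof -
  have "computable (Suc (Suc k)) (\<lambda>\<alpha> ys. Suc (ys ! 1))"
    by (intro computable_Suc computable_proj) simp
  from computable_rec_nat[OF G F this]
  have "computable k (\<lambda>\<alpha> xs. rec_nat (F \<alpha> xs) (\<lambda>n y. Suc y) (G \<alpha> xs))"
    by simp
  moreover have "rec_nat a (\<lambda>n y. Suc y) b = a + b" for a b :: nat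
    by (induction b) simp_all
  ultimately show ?thesis
    by simp
qed

lemma computable_minus_one:
  assumes F: "computable k F"
  shows "computable k (\<lambda>\<alpha> xs. F \<alpha> xs - 1)"
proof -
  from computable_rec_nat[OF F computable_zero computable_proj[of 0 "Suc (Suc k)"]]
  have "computable k (\<lambda>\<alpha> xs. rec_nat 0 (\<lambda>n y. n) (F \<alpha> xs))"
    by simp
  moreover have "rec_nat 0 (\<lambda>n y. n) a = a - 1" for a :: nat
    by (cases a) simp_all
  ultimately show ?thesis
    by simp
qed

lemma computable_diff:
  assumes F: "computable k F" and G: "computable k G"
  shows "computable k (\<lambda>\<alpha> xs. F \<alpha> xs - G \<alpha> xs)"
proof -
  have "computable (Suc (Suc k)) (\<lambda>\<alpha> ys. ys ! 1 - 1)"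
    by (intro computable_minus_one computable_proj) simp
  from computable_rec_nat[OF G F this]
  have "computable k (\<lambda>\<alpha> xs. rec_nat (F \<alpha> xs) (\<lambda>n y. y - 1) (G \<alpha> xs))"
    by simp
  moreover have "rec_nat a (\<lambda>n y. y - 1) b = a - b" for a b :: nat
    by (induction b) simp_all
  ultimately show ?thesis
    by simp
qed

lemma computable_if_zero:
  assumes N: "computable k N" and F: "computable k F" and G: "computable k G"
  shows "computable k (\<lambda>\<alpha> xs. if N \<alpha> xs = 0 then F \<alpha> xs else G \<alpha> xs)"
proof -
  from computable_rec_nat[OF N F computable_tl_args[OF computable_tl_args[OF G]]]
  have "computable k (\<lambda>\<alpha> xs. rec_nat (F \<alpha> xs) (\<lambda>n y. G \<alpha> xs) (N \<alpha> xs))"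
    by simp
  moreover have "rec_nat a (\<lambda>n y. b) c = (if c = 0 then a else b)" for a b c :: nat
    by (cases c) simp_all
  ultimately show ?thesis
    by simp
qed

lemma computable_if:
  assumes "computable_pred k P" and "computable k F" and "computable k G"
  shows "computable k (\<lambda>\<alpha> xs. if P \<alpha> xs then F \<alpha> xs else G \<alpha> xs)"
  using computable_if_zero[OF assms(1)[unfolded computable_pred_def] assms(3) assms(2)]
  by (rule computable_cong) simp

lemma computable_pred_less:
  assumes "computable k F" and "computable k G"
  shows "computable_pred k (\<lambda>\<alpha> xs. F \<alpha> xs < G \<alpha> xs)"
  unfolding computable_pred_def
  using computable_if_zero[OF computable_diff[OF assms(2,1)] computable_const[of k 0]
      computable_const[of k 1]]
  by (rule computable_cong) simp

lemma computable_pred_not: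
  assumes "computable_pred k P"
  shows "computable_pred k (\<lambda>\<alpha> xs. \<not> P \<alpha> xs)"
  using computable_diff[OF computable_const[of k 1] assms[unfolded computable_pred_def]]
  unfolding computable_pred_def by (rule computable_cong) simp

lemma computable_pred_conj:
  assumes "computable_pred k P" and "computable_pred k Q"
  shows "computable_pred k (\<lambda>\<alpha> xs. P \<alpha> xs \<and> Q \<alpha> xs)"
  using computable_if[OF assms(1) assms(2)[unfolded computable_pred_def] computable_zero]
  unfolding computable_pred_def by (rule computable_cong) simp

lemma computable_pred_disj:
  assumes "computable_pred k P" and "computable_pred k Q"
  shows "computable_pred k (\<lambda>\<alpha> xs. P \<alpha> xs \<or> Q \<alpha> xs)"
  using computable_pred_not[OF computable_pred_conj[OF assms[THEN computable_pred_not]]]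
  by (rule computable_pred_cong) simp

lemma computable_pred_imp:
  assumes "computable_pred k P" and "computable_pred k Q"
  shows "computable_pred k (\<lambda>\<alpha> xs. P \<alpha> xs \<longrightarrow> Q \<alpha> xs)"
  using computable_pred_disj[OF computable_pred_not[OF assms(1)] assms(2)]
  by (rule computable_pred_cong) simp

lemma computable_pred_eq:
  assumes "computable k F" and "computable k G"
  shows "computable_pred k (\<lambda>\<alpha> xs. F \<alpha> xs = G \<alpha> xs)"
  using computable_pred_conj[OF computable_pred_not[OF computable_pred_less[OF assms]]
      computable_pred_not[OF computable_pred_less[OF assms(2,1)]]]
  by (rule computable_pred_cong) auto

lemma computable_pred_comp2:
  assumes "computable_pred 2 P" and "computable k F" and "computable k G"
  shows "computable_pred k (\<lambda>\<alpha> xs. P \<alpha> [F \<alpha> xs, G \<alpha> xs])"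
  using assms computable_comp[of "[F, G]" "\<lambda>\<alpha> ys. of_bool (P \<alpha> ys)" k]
  unfolding computable_pred_def by (simp add: numeral_2_eq_2)

lemma computable_pred_all_less:
  assumes B: "computable k B" and P: "computable_pred (Suc k) P"
  shows "computable_pred k (\<lambda>\<alpha> xs. \<forall>i < B \<alpha> xs. P \<alpha> (i # xs))"
proof -
  have "computable_pred (Suc (Suc k)) (\<lambda>\<alpha> ys. P \<alpha> (ys ! 0 # drop 2 ys))"
    using computable_drop_second_arg[OF P[unfolded computable_pred_def]] unfolding computable_pred_def .
  then have "computable (Suc (Suc k)) (\<lambda>\<alpha> ys. if P \<alpha> (ys ! 0 # drop 2 ys) then ys ! 1 else 0)"
    by (rule computable_if[OF _ computable_proj computable_zero]) simp
  from computable_rec_nat[OF B computable_const[of k 1] this]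
  have "computable k (\<lambda>\<alpha> xs. rec_nat 1 (\<lambda>n y. if P \<alpha> (n # xs) then y else 0) (B \<alpha> xs))"
    by (simp cong: if_cong)
  moreover have "rec_nat (Suc 0) (\<lambda>n y. if Q n then y else 0) b = of_bool (\<forall>i < b. Q i)" for Q b
    by (induction b) (auto simp: less_Suc_eq)
  ultimately show ?thesis
    unfolding computable_pred_def by simp
qed

lemma computable_pred_ex_less:
  assumes "computable k B" and "computable_pred (Suc k) P"
  shows "computable_pred k (\<lambda>\<alpha> xs. \<exists>i < B \<alpha> xs. P \<alpha> (i # xs))"
  using computable_pred_not[OF computable_pred_all_less[OF assms(1) computable_pred_not[OF assms(2)]]]
  by (rule computable_pred_cong) simp

lemma computable_Least:
  assumes P: "computable_pred (Suc k) P"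
    and ex: "\<And>\<alpha> xs. length xs = k \<Longrightarrow> \<exists>n. P \<alpha> (n # xs)"
  shows "computable k (\<lambda>\<alpha> xs. LEAST n. P \<alpha> (n # xs))"
proof -
  obtain e where e: "\<forall>\<alpha> xs. length xs = Suc k \<longrightarrow> reval \<alpha> e xs (of_bool (\<not> P \<alpha> xs))"
    using computable_pred_not[OF P] unfolding computable_pred_def computable_def by blast
  have "reval \<alpha> (RMin e) xs (LEAST n. P \<alpha> (n # xs))" if "length xs = k" for \<alpha> xs
  proof (rule reval.mini)
    show "reval \<alpha> e ((LEAST n. P \<alpha> (n # xs)) # xs) 0"
      using e[rule_format, of "(LEAST n. P \<alpha> (n # xs)) # xs" \<alpha>] that LeastI_ex[OF ex[OF that]]
      by simp
    show "\<forall>m < (LEAST n. P \<alpha> (n # xs)). \<exists>y. reval \<alpha> e (m # xs) y \<and> 0 < y"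
    proof (intro allI impI exI conjI)
      fix m assume "m < (LEAST n. P \<alpha> (n # xs))"
      then have "\<not> P \<alpha> (m # xs)"
        by (rule not_less_Least)
      then show "reval \<alpha> e (m # xs) 1"
        using e[rule_format, of "m # xs" \<alpha>] that by simp
    qed simp
  qed
  then show ?thesis
    unfolding computable_def by blast
qed

lemma computable_div2:
  assumes F: "computable k F"
  shows "computable k (\<lambda>\<alpha> xs. F \<alpha> xs div 2)"
proof -
  have "computable_pred (Suc k) (\<lambda>\<alpha> ys. F \<alpha> (tl ys) < ys ! 0 + ys ! 0 + 2)"
    by (intro computable_pred_less computable_tl_args F computable_add computable_proj
        computable_const) simp_all
  then have "computable k (\<lambda>\<alpha> xs. LEAST d. F \<alpha> (tl (d # xs)) < (d # xs) ! 0 + (d # xs) ! 0 + 2)"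
    by (rule computable_Least) (simp, presburger)
  then have "computable k (\<lambda>\<alpha> xs. LEAST d. F \<alpha> xs < d + d + 2)"
    by simp
  moreover have "(LEAST d. a < d + d + 2) = a div 2" for a :: nat
    by (rule Least_equality) auto
  ultimately show ?thesis
    by simp
qed

lemma computable_pred_even:
  assumes "computable k F"
  shows "computable_pred k (\<lambda>\<alpha> xs. even (F \<alpha> xs))"
proof -
  have "computable_pred k (\<lambda>\<alpha> xs. F \<alpha> xs = F \<alpha> xs div 2 + F \<alpha> xs div 2)"
    using assms by (intro computable_pred_eq computable_add computable_div2)
  moreover have "n = n div 2 + n div 2 \<longleftrightarrow> even n" for n :: nat
    by presburger
  ultimately show ?thesis
    by simp
qed

lemma computable_triangle:
  assumes F: "computable k F"
  shows "computable k (\<lambda>\<alpha> xs. triangle (F \<alpha> xs))"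
proof -
  have "computable (Suc (Suc k)) (\<lambda>\<alpha> ys. ys ! 1 + Suc (ys ! 0))"
    by (intro computable_add computable_Suc computable_proj) simp_all
  from computable_rec_nat[OF F computable_zero this]
  have "computable k (\<lambda>\<alpha> xs. rec_nat 0 (\<lambda>n y. y + Suc n) (F \<alpha> xs))"
    by simp
  moreover have "rec_nat 0 (\<lambda>n y. y + Suc n) a = triangle a" for a
    by (induction a) simp_all
  ultimately show ?thesis
    by simp
qed

section \<open>Decoding pairs and lists\<close>

lemma prod_decode_via_triangle:
  fixes n :: nat
  defines "s \<equiv> LEAST s. n < triangle (Suc s)"
  shows "prod_decode n = (n - triangle s, s - (n - triangle s))"
proof -
  obtain x y where xy: "prod_decode n = (x, y)"
    by fastforce
  then have n: "n = triangle (x + y) + x"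
    using prod_decode_inverse[of n] by (simp add: prod_encode_def)
  have "s = x + y"
    unfolding s_def
  proof (rule Least_equality)
    show "n < triangle (Suc (x + y))"
      using n by simp
    show "x + y \<le> s'" if "n < triangle (Suc s')" for s'
    proof (rule ccontr)
      assume "\<not> x + y \<le> s'"
      then have "triangle (Suc s') \<le> triangle (x + y)"
        unfolding triangle_def by (intro div_le_mono mult_le_mono) auto
      then show False
        using that n by simp
    qed
  qed
  then show ?thesis
    using xy n by simp
qed

lemma computable_prod_decode:
  assumes F: "computable k F"
  shows "computable k (\<lambda>\<alpha> xs. fst (prod_decode (F \<alpha> xs)))"
    and "computable k (\<lambda>\<alpha> xs. snd (prod_decode (F \<alpha> xs)))"
proof -
  have "computable_pred (Suc k) (\<lambda>\<alpha> ys. F \<alpha> (tl ys) < triangle (Suc (ys ! 0)))"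
    by (intro computable_pred_less computable_tl_args F computable_triangle computable_Suc
        computable_proj) simp
  then have "computable k (\<lambda>\<alpha> xs. LEAST s. F \<alpha> (tl (s # xs)) < triangle (Suc ((s # xs) ! 0)))"
    by (rule computable_Least) (simp, metis le_add2 less_Suc_eq_le triangle_Suc)
  then have S: "computable k (\<lambda>\<alpha> xs. LEAST s. F \<alpha> xs < triangle (Suc s))"
    by simp
  have X: "computable k (\<lambda>\<alpha> xs. F \<alpha> xs - triangle (LEAST s. F \<alpha> xs < triangle (Suc s)))"
    by (intro computable_diff computable_triangle F S)
  show "computable k (\<lambda>\<alpha> xs. fst (prod_decode (F \<alpha> xs)))"
    using X by (simp add: prod_decode_via_triangle)
  show "computable k (\<lambda>\<alpha> xs. snd (prod_decode (F \<alpha> xs)))"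
    using computable_diff[OF S X] by (simp add: prod_decode_via_triangle)
qed

lemma list_encode_tl:
  "list_encode (tl (list_decode c)) = (if c = 0 then 0 else snd (prod_decode (c - 1)))"
  by (cases c) (auto split: prod.split)

lemma computable_list_drop:
  assumes F: "computable k F" and G: "computable k G"
  shows "computable k (\<lambda>\<alpha> xs. list_encode (drop (G \<alpha> xs) (list_decode (F \<alpha> xs))))"
proof -
  have "computable (Suc (Suc k)) (\<lambda>\<alpha> ys. if ys ! 1 = 0 then 0 else snd (prod_decode (ys ! 1 - 1)))"
    by (intro computable_if_zero computable_proj computable_zero computable_prod_decode
        computable_minus_one) simp_all
  from computable_rec_nat[OF G F this]
  have "computable k (\<lambda>\<alpha> xs. rec_nat (F \<alpha> xs)
      (\<lambda>n y. if y = 0 then 0 else snd (prod_decode (y - 1))) (G \<alpha> xs))"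
    by (simp cong: if_cong)
  moreover have "rec_nat c (\<lambda>n y. if y = 0 then 0 else snd (prod_decode (y - 1))) m =
      list_encode (drop m (list_decode c))" for c m
    by (induction m) (simp_all add: list_encode_tl[symmetric] drop_Suc tl_drop)
  ultimately show ?thesis
    by simp
qed

lemma computable_list_length:
  assumes F: "computable k F"
  shows "computable k (\<lambda>\<alpha> xs. length (list_decode (F \<alpha> xs)))"
proof -
  have "computable_pred (Suc k) (\<lambda>\<alpha> ys. list_encode (drop (ys ! 0) (list_decode (F \<alpha> (tl ys)))) = 0)"
    by (intro computable_pred_eq computable_list_drop computable_tl_args F computable_proj
        computable_zero) simp
  then have "computable k (\<lambda>\<alpha> xs. LEAST m.
      list_encode (drop ((m # xs) ! 0) (list_decode (F \<alpha> (tl (m # xs))))) = 0)"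
    by (rule computable_Least) (simp, metis drop_all order_refl list_encode.simps(1))
  moreover have "(LEAST m. list_encode (drop m l) = 0) = length l" for l
    by (rule Least_equality) (simp, metis list_encode_eq list_encode.simps(1) drop_eq_Nil)
  ultimately show ?thesis
    by simp
qed

lemma computable_list_nth:
  assumes F: "computable k F" and G: "computable k G"
  shows "computable k (\<lambda>\<alpha> xs. nth_default 0 (list_decode (F \<alpha> xs)) (G \<alpha> xs))"
proof -
  let ?d = "\<lambda>\<alpha> xs. list_encode (drop (G \<alpha> xs) (list_decode (F \<alpha> xs)))"
  have "computable k (\<lambda>\<alpha> xs. if ?d \<alpha> xs = 0 then 0 else fst (prod_decode (?d \<alpha> xs - 1)))"
    by (intro computable_if_zero computable_list_drop F G computable_zero computable_prod_decode
        computable_minus_one)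
  moreover have "nth_default 0 l i =
      (if list_encode (drop i l) = 0 then 0 else fst (prod_decode (list_encode (drop i l) - 1)))" for l i
    by (cases "i < length l") (simp_all add: nth_default_def Cons_nth_drop_Suc[symmetric])
  ultimately show ?thesis
    by simp
qed

lemma sorted_wrt_less_iff_nth_default:
  "sorted_wrt (<) l \<longleftrightarrow> (\<forall>j < length l. \<forall>i < j. nth_default 0 l i < nth_default 0 l j)"
  unfolding sorted_wrt_iff_nth_less by (auto simp: nth_default_def)

lemma computable_pred_sorted:
  assumes F: "computable k F"
  shows "computable_pred k (\<lambda>\<alpha> xs. sorted_wrt (<) (list_decode (F \<alpha> xs)))"
proof -
  have F2: "computable (Suc (Suc k)) (\<lambda>\<alpha> zs. F \<alpha> (tl (tl zs)))"
    using computable_tl_args[OF computable_tl_args[OF F]] by simp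
  have "computable_pred (Suc (Suc k)) (\<lambda>\<alpha> zs.
      nth_default 0 (list_decode (F \<alpha> (tl (tl zs)))) (zs ! 0) <
      nth_default 0 (list_decode (F \<alpha> (tl (tl zs)))) (zs ! 1))"
    by (intro computable_pred_less computable_list_nth F2 computable_proj) simp_all
  from computable_pred_all_less[OF computable_proj[of 0 "Suc k"] this]
  have "computable_pred (Suc k) (\<lambda>\<alpha> ys. \<forall>i < ys ! 0.
      nth_default 0 (list_decode (F \<alpha> (tl ys))) i < nth_default 0 (list_decode (F \<alpha> (tl ys))) (ys ! 0))"
    by simp
  from computable_pred_all_less[OF computable_list_length[OF F] this]
  show ?thesis
    by (simp add: sorted_wrt_less_iff_nth_default)
qed

lemma set_subset_iff_nth_default:
  "set l \<subseteq> set m \<longleftrightarrow> (\<forall>i < length l. \<exists>j < length m. nth_default 0 l i = nth_default 0 m j)"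
proof -
  have "set l \<subseteq> set m \<longleftrightarrow> (\<forall>i < length l. \<exists>j < length m. l ! i = m ! j)"
    unfolding subset_iff in_set_conv_nth by metis
  then show ?thesis
    by (auto simp: nth_default_def)
qed

lemma computable_pred_set_subset:
  assumes F: "computable k F" and G: "computable k G"
  shows "computable_pred k (\<lambda>\<alpha> xs. set (list_decode (F \<alpha> xs)) \<subseteq> set (list_decode (G \<alpha> xs)))"
proof -
  have F2: "computable (Suc (Suc k)) (\<lambda>\<alpha> zs. F \<alpha> (tl (tl zs)))"
    using computable_tl_args[OF computable_tl_args[OF F]] by simp
  have G1: "computable (Suc k) (\<lambda>\<alpha> ys. G \<alpha> (tl ys))"
    using computable_tl_args[OF G] .
  have G2: "computable (Suc (Suc k)) (\<lambda>\<alpha> zs. G \<alpha> (tl (tl zs)))"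
    using computable_tl_args[OF G1] by simp
  have "computable_pred (Suc (Suc k)) (\<lambda>\<alpha> zs.
      nth_default 0 (list_decode (F \<alpha> (tl (tl zs)))) (zs ! 1) =
      nth_default 0 (list_decode (G \<alpha> (tl (tl zs)))) (zs ! 0))"
    by (intro computable_pred_eq computable_list_nth F2 G2 computable_proj) simp_all
  from computable_pred_ex_less[OF computable_list_length[OF G1] this]
  have "computable_pred (Suc k) (\<lambda>\<alpha> ys. \<exists>j < length (list_decode (G \<alpha> (tl ys))).
      nth_default 0 (list_decode (F \<alpha> (tl ys))) (ys ! 0) = nth_default 0 (list_decode (G \<alpha> (tl ys))) j)"
    by simp
  from computable_pred_all_less[OF computable_list_length[OF F] this]
  show ?thesis
    by (simp add: set_subset_iff_nth_default)
qed

lemma strict_prefix_iff_nth: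
  "strict_prefix l m \<longleftrightarrow> length l < length m \<and> (\<forall>i < length l. l ! i = m ! i)"
proof
  assume "strict_prefix l m"
  then show "length l < length m \<and> (\<forall>i < length l. l ! i = m ! i)"
    by (auto simp: prefix_length_less strict_prefix_def prefix_def nth_append)
next
  assume *: "length l < length m \<and> (\<forall>i < length l. l ! i = m ! i)"
  then have "take (length l) m = l"
    by (intro nth_equalityI) auto
  then have "m = l @ drop (length l) m"
    by (metis append_take_drop_id)
  then show "strict_prefix l m"
    using * unfolding strict_prefix_def prefix_def by auto
qed

lemma computable_pred_strict_prefix:
  assumes F: "computable k F" and G: "computable k G"
  shows "computable_pred k (\<lambda>\<alpha> xs. strict_prefix (list_decode (F \<alpha> xs)) (list_decode (G \<alpha> xs)))"
proof -
  have F1: "computable (Suc k) (\<lambda>\<alpha> ys. F \<alpha> (tl ys))"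
    using F by (rule computable_tl_args)
  have G1: "computable (Suc k) (\<lambda>\<alpha> ys. G \<alpha> (tl ys))"
    using G by (rule computable_tl_args)
  have "computable_pred (Suc k) (\<lambda>\<alpha> ys.
      nth_default 0 (list_decode (F \<alpha> (tl ys))) (ys ! 0) = nth_default 0 (list_decode (G \<alpha> (tl ys))) (ys ! 0))"
    by (intro computable_pred_eq computable_list_nth F1 G1 computable_proj) simp_all
  from computable_pred_all_less[OF computable_list_length[OF F] this]
  have "computable_pred k (\<lambda>\<alpha> xs. \<forall>i < length (list_decode (F \<alpha> xs)).
      nth_default 0 (list_decode (F \<alpha> xs)) i = nth_default 0 (list_decode (G \<alpha> xs)) i)"
    by simp
  then have "computable_pred k (\<lambda>\<alpha> xs. length (list_decode (F \<alpha> xs)) < length (list_decode (G \<alpha> xs)) \<and>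
      (\<forall>i < length (list_decode (F \<alpha> xs)).
        nth_default 0 (list_decode (F \<alpha> xs)) i = nth_default 0 (list_decode (G \<alpha> xs)) i))"
    by (intro computable_pred_conj computable_pred_less computable_list_length F G)
  then show ?thesis
    by (rule computable_pred_cong) (auto simp: strict_prefix_iff_nth nth_default_def)
qed

section \<open>Strong Weihrauch reductions by computable maps\<close>

primrec subst_oracle :: "rprog \<Rightarrow> rprog \<Rightarrow> rprog" where
  "subst_oracle e RZero = RZero"
| "subst_oracle e RSucc = RSucc"
| "subst_oracle e (RProj i) = RProj i"
| "subst_oracle e RQuery = RComp e [RProj 0]"
| "subst_oracle e (RComp f gs) = RComp (subst_oracle e f) (map (subst_oracle e) gs)"
| "subst_oracle e (RPrimRec g h) = RPrimRec (subst_oracle e g) (subst_oracle e h)"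
| "subst_oracle e (RMin f) = RMin (subst_oracle e f)"

lemma reval_subst_oracle:
  assumes "reval \<beta> c xs z" and "comp_at e \<alpha> \<beta>"
  shows "reval \<alpha> (subst_oracle e c) xs z"
  using assms
proof (induction rule: reval.induct)
  case (orc \<beta> x xs)
  then show ?case
    by (auto simp: comp_at_def intro!: reval.comp[where ys = "[x]"] reval.proj[of 0 "x # xs", simplified])
next
  case (comp ys gs \<beta> xs f z)
  then show ?case
    by (auto intro!: reval.comp[where ys = ys])
qed (auto intro: reval.intros)

lemma comp_at_subst_oracle:
  "comp_at e \<alpha> \<beta> \<Longrightarrow> comp_at c \<beta> \<gamma> \<Longrightarrow> comp_at (subst_oracle e c) \<alpha> \<gamma>"
  unfolding comp_at_def[of c] comp_at_def[of "subst_oracle e c"] using reval_subst_oracle by blast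

lemma sW_le_trans:
  assumes "sW_le f g" and "sW_le g h"
  shows "sW_le f h"
proof -
  obtain a1 b1 where fg: "\<forall>G. realizer g G \<longrightarrow> (\<forall>p \<in> pdom f. \<exists>q r. comp_at a1 p q \<and> q \<in> pdom g \<and>
      comp_at b1 (G q) r \<and> r \<in> psol f p)"
    using assms(1) unfolding sW_le_def by blast
  obtain a2 b2 where gh: "\<forall>H. realizer h H \<longrightarrow> (\<forall>q \<in> pdom g. \<exists>q' r. comp_at a2 q q' \<and> q' \<in> pdom h \<and>
      comp_at b2 (H q') r \<and> r \<in> psol g q)"
    using assms(2) unfolding sW_le_def by blast
  have "\<exists>q r. comp_at (subst_oracle a1 a2) p q \<and> q \<in> pdom h \<and>
      comp_at (subst_oracle b2 b1) (H q) r \<and> r \<in> psol f p"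
    if H: "realizer h H" and p: "p \<in> pdom f" for H p
  proof -
    obtain Q R where QR: "\<And>q. q \<in> pdom g \<Longrightarrow> comp_at a2 q (Q q) \<and> Q q \<in> pdom h \<and>
        comp_at b2 (H (Q q)) (R q) \<and> R q \<in> psol g q"
      using gh H by metis
    then have "realizer g R"
      unfolding realizer_def by blast
    then obtain q r where "comp_at a1 p q" "q \<in> pdom g" "comp_at b1 (R q) r" "r \<in> psol f p"
      using fg p by blast
    then show ?thesis
      using QR[of q] comp_at_subst_oracle by blast
  qed
  then show ?thesis
    unfolding sW_le_def by blast
qed

definition computable_op :: "(baire \<Rightarrow> baire) \<Rightarrow> bool" where
  "computable_op \<Phi> \<longleftrightarrow> computable 1 (\<lambda>\<alpha> xs. \<Phi> \<alpha> (xs ! 0))"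

lemma comp_at_computable_op:
  assumes "computable_op \<Phi>"
  obtains e where "\<And>\<alpha>. comp_at e \<alpha> (\<Phi> \<alpha>)"
  using assms unfolding computable_op_def computable_def comp_at_def
  by (metis One_nat_def length_Cons list.size(3) nth_Cons_0)

lemma sW_le_computable_op:
  assumes "computable_op \<Phi>" and "computable_op \<Psi>"
    and "\<And>p. p \<in> pdom f \<Longrightarrow> \<Phi> p \<in> pdom g \<and> (\<forall>y \<in> psol g (\<Phi> p). \<Psi> y \<in> psol f p)"
  shows "sW_le f g"
proof -
  obtain a b where "\<And>\<alpha>. comp_at a \<alpha> (\<Phi> \<alpha>)" and "\<And>\<alpha>. comp_at b \<alpha> (\<Psi> \<alpha>)"
    using assms(1,2) comp_at_computable_op by metis
  then show ?thesis
    unfolding sW_le_def realizer_def using assms(3) by blast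
qed

lemma computable_op_id: "computable_op (\<lambda>y. y)"
  unfolding computable_op_def by (rule computable_oracle_arg)

section \<open>Homogeneous solutions of clopen sets\<close>

lemma ramsey_comp: "f \<in> ramsey \<Longrightarrow> g \<in> ramsey \<Longrightarrow> f \<circ> g \<in> ramsey"
  unfolding ramsey_def by (simp add: strict_mono_def)

lemma id_in_ramsey: "id \<in> ramsey"
  unfolding ramsey_def by (simp add: strict_mono_def)

lemma HS_inter_eq: "HS P \<inter> P = {f \<in> ramsey. \<forall>g \<in> ramsey. f \<circ> g \<in> P}"
  unfolding HS_def using id_in_ramsey by fastforce

lemma HS_diff_eq: "HS P - P = {f \<in> ramsey. \<forall>g \<in> ramsey. f \<circ> g \<notin> P}"
  unfolding HS_def using id_in_ramsey by fastforce

lemma HS_complement: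
  assumes "P \<inter> Q = {}" and "P \<union> Q = ramsey"
  shows "HS Q - Q = HS P \<inter> P"
  using assms unfolding HS_inter_eq HS_diff_eq by (blast dest: ramsey_comp)

lemma computable_op_pright: "computable_op pright"
  unfolding computable_op_def pright_def mult_2
  by (intro computable_oracle computable_add computable_proj computable_const) simp_all

lemma sW_le_FindHS_Delta01_Pi01: "sW_le FindHS_Delta01 FindHS_Pi01"
proof (rule sW_le_computable_op[OF computable_op_pright computable_op_id])
  fix p assume "p \<in> pdom FindHS_Delta01"
  then have "is_clopen_name p" and "HS (open_of (pleft p)) \<inter> open_of (pleft p) \<noteq> {}"
    unfolding FindHS_Delta01_def pdom_def by auto
  moreover have eq: "HS (open_of (pright p)) - open_of (pright p) =
      HS (open_of (pleft p)) \<inter> open_of (pleft p)"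
    using \<open>is_clopen_name p\<close> unfolding is_clopen_name_def by (intro HS_complement) auto
  ultimately show "pright p \<in> pdom FindHS_Pi01 \<and>
      (\<forall>y \<in> psol FindHS_Pi01 (pright p). y \<in> psol FindHS_Delta01 p)"
    unfolding FindHS_Pi01_def FindHS_Delta01_def pdom_def psol_def
    by (simp only: fst_conv snd_conv mem_Collect_eq eq) (auto simp: is_clopen_name_def)
qed

section \<open>From open sets to trees\<close>

lemma strict_mono_extends_sorted:
  fixes t :: "nat list"
  assumes "sorted_wrt (<) t"
  shows "\<exists>g. strict_mono g \<and> (\<forall>k < length t. g k = t ! k)"
proof -
  define g where "g k = (if k < length t then t ! k else sum_list t + k)" for k
  have "g k < g (Suc k)" for k
  proof (cases "Suc k < length t")
    case True
    then show ?thesis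
      using assms by (simp add: g_def sorted_wrt_iff_nth_less)
  next
    case False
    have "g k \<le> sum_list t + k"
      using elem_le_sum_list[of k t] by (simp add: g_def trans_le_add1)
    then show ?thesis
      using False by (simp add: g_def)
  qed
  then have "strict_mono g"
    by (rule strict_mono_Suc_iff[THEN iffD2, rule_format])
  then show ?thesis
    by (auto simp: g_def)
qed

lemma ex_subsequence_in_cone_iff:
  assumes f: "f \<in> ramsey" and s: "sorted_wrt (<) s"
  shows "(\<exists>g \<in> ramsey. f \<circ> g \<in> cone s) \<longleftrightarrow> set s \<subseteq> range f"
proof
  assume "\<exists>g \<in> ramsey. f \<circ> g \<in> cone s"
  then obtain g where "map (f \<circ> g) [0..<length s] = s"
    unfolding cone_def by blast
  then have "set s = (f \<circ> g) ` {0..<length s}"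
    by (metis set_map set_upt)
  then show "set s \<subseteq> range f"
    by auto
next
  assume sub: "set s \<subseteq> range f"
  then have inv: "f (inv f v) = v" if "v \<in> set s" for v
    using that by (blast intro: f_inv_into_f)
  have mono: "strict_mono f"
    using f unfolding ramsey_def by simp
  have "sorted_wrt (<) (map (inv f) s)"
    using s unfolding sorted_wrt_map
    by (rule sorted_wrt_mono_rel[rotated]) (metis inv mono strict_mono_less)
  then obtain g where g: "strict_mono g" "\<forall>k < length s. g k = inv f (s ! k)"
    using strict_mono_extends_sorted by fastforce
  have "map (f \<circ> g) [0..<length s] = s"
    using g inv by (intro nth_equalityI) auto
  moreover have "g \<in> ramsey"
    using g unfolding ramsey_def by simp
  ultimately show "\<exists>g \<in> ramsey. f \<circ> g \<in> cone s"
    using ramsey_comp[OF f] unfolding cone_def by blast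
qed

lemma HS_diff_open_of:
  assumes "is_open_name p"
  shows "HS (open_of p) - open_of p = {f \<in> ramsey. \<forall>s \<in> enum_strings p. \<not> set s \<subseteq> range f}"
proof -
  have "(\<forall>g \<in> ramsey. f \<circ> g \<notin> open_of p) \<longleftrightarrow> (\<forall>s \<in> enum_strings p. \<not> set s \<subseteq> range f)"
    if "f \<in> ramsey" for f
  proof -
    have "(\<exists>g \<in> ramsey. f \<circ> g \<in> open_of p) \<longleftrightarrow> (\<exists>s \<in> enum_strings p. \<exists>g \<in> ramsey. f \<circ> g \<in> cone s)"
      unfolding open_of_def by blast
    also have "\<dots> \<longleftrightarrow> (\<exists>s \<in> enum_strings p. set s \<subseteq> range f)"
      using ex_subsequence_in_cone_iff[OF that] assms unfolding is_open_name_def by meson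
    finally show ?thesis
      by blast
  qed
  then show ?thesis
    unfolding HS_diff_eq by blast
qed

lemma strict_mono_iff_sorted_prefixes:
  "strict_mono x \<longleftrightarrow> (\<forall>N. sorted_wrt (<) (map x [0..<N]))"
proof
  assume "strict_mono x"
  then show "\<forall>N. sorted_wrt (<) (map x [0..<N])"
    by (auto simp: sorted_wrt_map intro: sorted_wrt_mono_rel[OF _ sorted_wrt_upt] strict_monoD)
next
  assume sorted: "\<forall>N. sorted_wrt (<) (map x [0..<N])"
  show "strict_mono x"
  proof (rule strict_monoI)
    fix i j :: nat
    assume "i < j"
    then show "x i < x j"
      using sorted[rule_format, of "Suc j"] unfolding sorted_wrt_iff_nth_less
      by (metis diff_zero length_map length_upt less_Suc_eq nth_map_upt add_0 lessI)
  qed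
qed

text \<open>Only the strings enumerated before stage \<open>length s\<close> are tested, which keeps the tree
  decidable relative to the name \<open>p\<close>.\<close>

definition avoiding_node :: "baire \<Rightarrow> nat list \<Rightarrow> bool" where
  "avoiding_node p s \<longleftrightarrow> sorted_wrt (<) s \<and>
     (\<forall>n < length s. 0 < p n \<longrightarrow> \<not> set (list_decode (p n - 1)) \<subseteq> set s)"

definition avoiding_tree_name :: "baire \<Rightarrow> baire" where
  "avoiding_tree_name p c = of_bool (avoiding_node p (list_decode c))"

lemma tree_of_avoiding_tree_name: "tree_of (avoiding_tree_name p) = Collect (avoiding_node p)"
  unfolding tree_of_def avoiding_tree_name_def by simp

lemma is_tree_name_avoiding_tree_name: "is_tree_name (avoiding_tree_name p)"
  unfolding is_tree_name_def tree_of_avoiding_tree_name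
  by (auto simp: avoiding_tree_name_def avoiding_node_def sorted_wrt_append)
    (meson trans_less_add1 le_supI1)

lemma paths_avoiding_node:
  "paths (Collect (avoiding_node p)) = {x \<in> ramsey. \<forall>s \<in> enum_strings p. \<not> set s \<subseteq> range x}"
proof (intro equalityI subsetI)
  fix x assume "x \<in> paths (Collect (avoiding_node p))"
  then have node: "avoiding_node p (map x [0..<N])" for N
    unfolding paths_def by simp
  then have "x \<in> ramsey"
    unfolding ramsey_def avoiding_node_def strict_mono_iff_sorted_prefixes by simp
  moreover have "\<not> set s \<subseteq> range x" if "s \<in> enum_strings p" for s
  proof
    assume "set s \<subseteq> range x"
    then obtain C where "finite C" "set s = x ` C"
      using finite_subset_image[of "set s" x UNIV] by auto
    then obtain K where "C \<subseteq> {..<K}"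
      using finite_nat_bounded by blast
    obtain n where n: "0 < p n" "s = list_decode (p n - 1)"
      using \<open>s \<in> enum_strings p\<close> unfolding enum_strings_def by blast
    define N where "N = max K (Suc n)"
    have "set s \<subseteq> set (map x [0..<N])"
      using \<open>set s = x ` C\<close> \<open>C \<subseteq> {..<K}\<close> unfolding N_def by auto
    then show False
      using node[of N] n unfolding avoiding_node_def N_def by auto
  qed
  ultimately show "x \<in> {x \<in> ramsey. \<forall>s \<in> enum_strings p. \<not> set s \<subseteq> range x}"
    by blast
next
  fix x assume x: "x \<in> {x \<in> ramsey. \<forall>s \<in> enum_strings p. \<not> set s \<subseteq> range x}"
  have "avoiding_node p (map x [0..<N])" for N
  proof -
    have "sorted_wrt (<) (map x [0..<N])"
      using x unfolding ramsey_def strict_mono_iff_sorted_prefixes by simp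
    moreover have "\<not> set (list_decode (p n - 1)) \<subseteq> set (map x [0..<N])" if "0 < p n" for n
    proof
      assume "set (list_decode (p n - 1)) \<subseteq> set (map x [0..<N])"
      then have "set (list_decode (p n - 1)) \<subseteq> range x"
        by auto
      then show False
        using x that unfolding enum_strings_def by blast
    qed
    ultimately show ?thesis
      unfolding avoiding_node_def by simp
  qed
  then show "x \<in> paths (Collect (avoiding_node p))"
    unfolding paths_def by simp
qed

lemma computable_op_avoiding_tree_name: "computable_op avoiding_tree_name"
proof -
  have arg: "computable 1 (\<lambda>\<alpha> xs. xs ! 0)"
    by (rule computable_proj) simp
  have "computable_pred (Suc 1) (\<lambda>\<alpha> ys. 0 < \<alpha> (ys ! 0) \<longrightarrow>
      \<not> set (list_decode (\<alpha> (ys ! 0) - 1)) \<subseteq> set (list_decode (ys ! 1)))"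
    by (intro computable_pred_imp computable_pred_less computable_pred_not computable_pred_set_subset
        computable_minus_one computable_oracle computable_proj computable_const) simp_all
  from computable_pred_all_less[OF computable_list_length[OF arg] this]
  have "computable_pred 1 (\<lambda>\<alpha> xs. \<forall>n < length (list_decode (xs ! 0)). 0 < \<alpha> n \<longrightarrow>
      \<not> set (list_decode (\<alpha> n - 1)) \<subseteq> set (list_decode (xs ! 0)))"
    by simp
  from computable_pred_conj[OF computable_pred_sorted[OF arg] this]
  show ?thesis
    unfolding computable_op_def avoiding_tree_name_def avoiding_node_def computable_pred_def .
qed

lemma sW_le_FindHS_Pi01_C_Baire: "sW_le FindHS_Pi01 C_Baire"
proof (rule sW_le_computable_op[OF computable_op_avoiding_tree_name computable_op_id])
  fix p assume "p \<in> pdom FindHS_Pi01"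
  then have "is_open_name p" and "HS (open_of p) - open_of p \<noteq> {}"
    unfolding FindHS_Pi01_def pdom_def by auto
  moreover have "paths (tree_of (avoiding_tree_name p)) = HS (open_of p) - open_of p"
    using \<open>is_open_name p\<close>
    by (simp add: tree_of_avoiding_tree_name paths_avoiding_node HS_diff_open_of)
  ultimately show "avoiding_tree_name p \<in> pdom C_Baire \<and>
      (\<forall>y \<in> psol C_Baire (avoiding_tree_name p). y \<in> psol FindHS_Pi01 p)"
    unfolding C_Baire_def FindHS_Pi01_def pdom_def psol_def
    using is_tree_name_avoiding_tree_name by simp
qed

section \<open>From trees to clopen sets\<close>

definition enum_name :: "(nat list \<Rightarrow> bool) \<Rightarrow> baire" where
  "enum_name Q n = (if Q (list_decode n) then Suc n else 0)"

lemma enum_strings_enum_name: "enum_strings (enum_name Q) = Collect Q"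
  unfolding enum_strings_def enum_name_def
  by (auto split: if_splits intro!: exI[of _ "list_encode _"])

definition interleave :: "baire \<Rightarrow> baire \<Rightarrow> baire" where
  "interleave a b n = (if even n then a (n div 2) else b (n div 2))"

lemma pleft_interleave [simp]: "pleft (interleave a b) = a"
  and pright_interleave [simp]: "pright (interleave a b) = b"
  unfolding pleft_def pright_def interleave_def by simp_all

definition increasing_pair :: "(nat \<Rightarrow> nat \<Rightarrow> bool) \<Rightarrow> nat list \<Rightarrow> bool" where
  "increasing_pair T s \<longleftrightarrow> length s = 2 \<and> s ! 0 < s ! 1 \<and> T (s ! 0) (s ! 1)"

lemma open_of_increasing_pair:
  "open_of (enum_name (increasing_pair T)) = {h \<in> ramsey. T (h 0) (h 1)}"
proof (intro equalityI subsetI)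
  fix h assume "h \<in> open_of (enum_name (increasing_pair T))"
  then obtain s where "increasing_pair T s" "h \<in> cone s"
    unfolding open_of_def enum_strings_enum_name by blast
  then show "h \<in> {h \<in> ramsey. T (h 0) (h 1)}"
    unfolding increasing_pair_def cone_def by (auto simp: numeral_2_eq_2)
next
  fix h assume h: "h \<in> {h \<in> ramsey. T (h 0) (h 1)}"
  then have "increasing_pair T [h 0, h 1]"
    unfolding increasing_pair_def ramsey_def by (simp add: strict_mono_less)
  moreover have "h \<in> cone [h 0, h 1]"
    using h unfolding cone_def by (simp add: numeral_2_eq_2)
  ultimately show "h \<in> open_of (enum_name (increasing_pair T))"
    unfolding open_of_def enum_strings_enum_name by blast
qed

lemma is_open_name_increasing_pair: "is_open_name (enum_name (increasing_pair T))"
  unfolding is_open_name_def enum_strings_enum_name increasing_pair_def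
  by (auto simp: sorted_wrt_iff_nth_less numeral_2_eq_2 less_Suc_eq)

definition pair_clopen_name :: "(nat \<Rightarrow> nat \<Rightarrow> bool) \<Rightarrow> baire" where
  "pair_clopen_name T =
     interleave (enum_name (increasing_pair T)) (enum_name (increasing_pair (\<lambda>a b. \<not> T a b)))"

lemma is_clopen_name_pair_clopen_name: "is_clopen_name (pair_clopen_name T)"
  unfolding is_clopen_name_def pair_clopen_name_def
  by (auto simp: is_open_name_increasing_pair open_of_increasing_pair)

lemma open_of_pleft_pair_clopen_name:
  "open_of (pleft (pair_clopen_name T)) = {h \<in> ramsey. T (h 0) (h 1)}"
  unfolding pair_clopen_name_def by (simp add: open_of_increasing_pair)

lemma computable_pred_increasing_pair:
  assumes T: "computable_pred 2 (\<lambda>\<alpha> ys. T \<alpha> (ys ! 0) (ys ! 1))" and F: "computable k F"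
  shows "computable_pred k (\<lambda>\<alpha> xs. increasing_pair (T \<alpha>) (list_decode (F \<alpha> xs)))"
proof -
  let ?x = "\<lambda>i \<alpha> xs. nth_default 0 (list_decode (F \<alpha> xs)) i"
  have x0: "computable k (?x 0)" and x1: "computable k (?x 1)"
    by (intro computable_list_nth F computable_const)+
  have "computable_pred k (\<lambda>\<alpha> xs. T \<alpha> (?x 0 \<alpha> xs) (?x 1 \<alpha> xs))"
    using computable_pred_comp2[OF T x0 x1] by simp
  then have "computable_pred k (\<lambda>\<alpha> xs. length (list_decode (F \<alpha> xs)) = 2 \<and>
      ?x 0 \<alpha> xs < ?x 1 \<alpha> xs \<and> T \<alpha> (?x 0 \<alpha> xs) (?x 1 \<alpha> xs))"
    by (intro computable_pred_conj computable_pred_eq computable_pred_less computable_list_length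
        x0 x1 F computable_const)
  then show ?thesis
    by (rule computable_pred_cong) (auto simp: increasing_pair_def nth_default_def)
qed

lemma computable_op_pair_clopen_name:
  assumes T: "computable_pred 2 (\<lambda>\<alpha> ys. T \<alpha> (ys ! 0) (ys ! 1))"
  shows "computable_op (\<lambda>\<alpha>. pair_clopen_name (T \<alpha>))"
proof -
  have T': "computable_pred 2 (\<lambda>\<alpha> ys. \<not> T \<alpha> (ys ! 0) (ys ! 1))"
    using computable_pred_not[OF T] .
  have half: "computable 1 (\<lambda>\<alpha> xs. xs ! 0 div 2)"
    by (intro computable_div2 computable_proj) simp
  show ?thesis
    unfolding computable_op_def pair_clopen_name_def interleave_def enum_name_def
    by (intro computable_if computable_pred_even computable_pred_increasing_pair[OF T half]
        computable_pred_increasing_pair[OF T' half] computable_Suc half computable_zero computable_proj)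
      simp
qed

lemma strict_mono_triangle: "strict_mono triangle"
  unfolding strict_mono_Suc_iff by simp

lemma list_encode_strict_prefix_less: "strict_prefix l m \<Longrightarrow> list_encode l < list_encode m"
proof (induction l arbitrary: m)
  case Nil
  then show ?case
    by (cases m) simp_all
next
  case (Cons a l)
  then obtain m' where "m = a # m'" and "strict_prefix l m'"
    by (cases m) auto
  with Cons.IH have "triangle (a + list_encode l) < triangle (a + list_encode m')"
    by (simp add: strict_mono_less[OF strict_mono_triangle])
  then show ?case
    using \<open>m = a # m'\<close> by (simp add: prod_encode_def)
qed

lemma strict_prefix_map_upt: "i < j \<Longrightarrow> strict_prefix (map x [0..<i]) (map x [0..<j])"
  unfolding strict_prefix_iff_nth by simp

definition tree_extends :: "baire \<Rightarrow> nat \<Rightarrow> nat \<Rightarrow> bool" where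
  "tree_extends p a b \<longleftrightarrow> list_decode a \<in> tree_of p \<and> strict_prefix (list_decode a) (list_decode b)"

lemma computable_pred_tree_extends: "computable_pred 2 (\<lambda>\<alpha> ys. tree_extends \<alpha> (ys ! 0) (ys ! 1))"
proof -
  have "computable_pred 2 (\<lambda>\<alpha> ys. \<alpha> (ys ! 0) \<noteq> 0 \<and>
      strict_prefix (list_decode (ys ! 0)) (list_decode (ys ! 1)))"
    by (intro computable_pred_conj computable_pred_not computable_pred_eq computable_pred_strict_prefix
        computable_oracle computable_proj computable_const) simp_all
  then show ?thesis
    by (rule computable_pred_cong) (simp add: tree_extends_def tree_of_def)
qed

lemma prefix_codes_in_HS:
  assumes "x \<in> paths (tree_of p)"
  shows "(\<lambda>i. list_encode (map x [0..<i])) \<in> HS {h \<in> ramsey. tree_extends p (h 0) (h 1)}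
    \<inter> {h \<in> ramsey. tree_extends p (h 0) (h 1)}"
proof -
  let ?f = "\<lambda>i. list_encode (map x [0..<i])"
  have f: "?f \<in> ramsey"
    unfolding ramsey_def by (auto intro: strict_monoI list_encode_strict_prefix_less strict_prefix_map_upt)
  have "tree_extends p (?f (g 0)) (?f (g 1))" if "g \<in> ramsey" for g
    using assms that unfolding tree_extends_def paths_def ramsey_def
    by (simp add: strict_prefix_map_upt strict_mono_less)
  then show ?thesis
    unfolding HS_inter_eq using f ramsey_comp by auto
qed

lemma HS_increasing_pair_chain:
  assumes y: "y \<in> HS {h \<in> ramsey. T (h 0) (h 1)} \<inter> {h \<in> ramsey. T (h 0) (h 1)}" and "i < j"
  shows "T (y i) (y j)"
proof -
  define g where "g k = (if k = 0 then i else j + k - 1)" for k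
  have "g \<in> ramsey"
    unfolding ramsey_def strict_mono_Suc_iff g_def using \<open>i < j\<close> by auto
  then have "T ((y \<circ> g) 0) ((y \<circ> g) 1)"
    using y unfolding HS_inter_eq by blast
  then show ?thesis
    by (simp add: g_def)
qed

lemma diagonal_path:
  assumes p: "is_tree_name p" and chain: "\<And>i j. i < j \<Longrightarrow> tree_extends p (y i) (y j)"
  shows "(\<lambda>n. nth_default 0 (list_decode (y (Suc n))) n) \<in> paths (tree_of p)"
proof -
  let ?\<sigma> = "\<lambda>i. list_decode (y i)"
  have prefix: "length (?\<sigma> i) < length (?\<sigma> j) \<and> (\<forall>k < length (?\<sigma> i). ?\<sigma> i ! k = ?\<sigma> j ! k)"
    if "i < j" for i j
    using chain[OF that] unfolding tree_extends_def strict_prefix_iff_nth by blast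
  have long: "i \<le> length (?\<sigma> i)" for i
  proof (induction i)
    case (Suc i)
    then show ?case
      using prefix[of i "Suc i"] by simp
  qed simp
  have diag: "map (\<lambda>n. nth_default 0 (?\<sigma> (Suc n)) n) [0..<n] = take n (?\<sigma> n)" for n
  proof (rule nth_equalityI)
    fix k assume "k < length (map (\<lambda>n. nth_default 0 (?\<sigma> (Suc n)) n) [0..<n])"
    then have "k < n" by simp
    moreover have "k < length (?\<sigma> (Suc k))"
      using long[of "Suc k"] by simp
    ultimately have "?\<sigma> (Suc k) ! k = ?\<sigma> n ! k"
      using prefix[of "Suc k" n] by (cases "Suc k = n") auto
    then show "map (\<lambda>n. nth_default 0 (?\<sigma> (Suc n)) n) [0..<n] ! k = take n (?\<sigma> n) ! k"
      using \<open>k < n\<close> \<open>k < length (?\<sigma> (Suc k))\<close> by (simp add: nth_default_def)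
  qed (use long in simp)
  have "?\<sigma> n \<in> tree_of p" for n
    using chain[of n "Suc n"] unfolding tree_extends_def by simp
  then have "take n (?\<sigma> n) \<in> tree_of p" for n
    using p unfolding is_tree_name_def by (metis append_take_drop_id)
  then show ?thesis
    by (simp add: paths_def diag)
qed

lemma computable_op_diagonal: "computable_op (\<lambda>y n. nth_default 0 (list_decode (y (Suc n))) n)"
  unfolding computable_op_def
  by (intro computable_list_nth computable_oracle computable_Suc computable_proj) simp_all

lemma sW_le_C_Baire_FindHS_Delta01: "sW_le C_Baire FindHS_Delta01"
proof (rule sW_le_computable_op[OF computable_op_pair_clopen_name[OF computable_pred_tree_extends]
      computable_op_diagonal])
  fix p assume "p \<in> pdom C_Baire"
  then have p: "is_tree_name p" and "paths (tree_of p) \<noteq> {}"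
    unfolding C_Baire_def pdom_def by auto
  then obtain x where "x \<in> paths (tree_of p)"
    by blast
  then have "HS {h \<in> ramsey. tree_extends p (h 0) (h 1)} \<inter> {h \<in> ramsey. tree_extends p (h 0) (h 1)} \<noteq> {}"
    using prefix_codes_in_HS by blast
  then have "pair_clopen_name (tree_extends p) \<in> pdom FindHS_Delta01"
    unfolding FindHS_Delta01_def pdom_def
    by (simp add: is_clopen_name_pair_clopen_name open_of_pleft_pair_clopen_name)
  moreover have "(\<lambda>n. nth_default 0 (list_decode (y (Suc n))) n) \<in> psol C_Baire p"
    if "y \<in> psol FindHS_Delta01 (pair_clopen_name (tree_extends p))" for y
  proof -
    have "y \<in> HS {h \<in> ramsey. tree_extends p (h 0) (h 1)} \<inter> {h \<in> ramsey. tree_extends p (h 0) (h 1)}"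
      using that unfolding FindHS_Delta01_def psol_def by (simp add: open_of_pleft_pair_clopen_name)
    then have "\<And>i j. i < j \<Longrightarrow> tree_extends p (y i) (y j)"
      by (rule HS_increasing_pair_chain)
    then show ?thesis
      unfolding C_Baire_def psol_def using diagonal_path[OF p] by simp
  qed
  ultimately show "pair_clopen_name (tree_extends p) \<in> pdom FindHS_Delta01 \<and>
      (\<forall>y \<in> psol FindHS_Delta01 (pair_clopen_name (tree_extends p)).
        (\<lambda>n. nth_default 0 (list_decode (y (Suc n))) n) \<in> psol C_Baire p)"
    by blast
qed

theorem mainTheorem3:
  shows "sW_equiv C_Baire FindHS_Delta01 \<and> sW_equiv FindHS_Delta01 FindHS_Pi01"
  unfolding sW_equiv_def
  using sW_le_C_Baire_FindHS_Delta01 sW_le_FindHS_Delta01_Pi01 sW_le_FindHS_Pi01_C_Baire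
    sW_le_trans by blast

end
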